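(* Let $(\mathfrak g,d,[\,,\,])$ be a differential graded Lie algebra over $k=\mathbb R$ or $\mathbb C$ such that each $\mathfrak g^i$ is a normed space, $d$ and $[\,,\,]$ are continuous, and there are a graded subspace $\mathbf H\subset\mathfrak g$, a projection $P_{\mathbf H}:\mathfrak g\to\mathbf H$ and a linear map $\eta:\mathfrak g\to\mathfrak g[-1]$ with $\mathrm{Id}=P_{\mathbf H}+d\eta+\eta d$ (also on the completion). Let $(\mathfrak g,\mu_* )$ be the $L_\infty$-algebra with $\mu_1=d$, $\mu_2(v_1,v_2)=(d\eta+\eta d)[v_1,v_2]$, and $\mu_n(v_1,\dots,v_n)=(-1)^n\sum_{\sigma\in Sh(n-1,n)}(-1)^{\tilde\sigma}e(\sigma)\eta[\mu_{n-1}(v_{\sigma(1)},\dots,v_{\sigma(n-1)}),v_{\sigma(n)}]$ for $n\ge3$. Fix a basis $[\gamma_\alpha]$ of $H^1(\mathfrak g,d)$ with representatives $\gamma_\alpha\in\ker d\cap\mathfrak g^1$, coordinates $t=(t^\alpha)$, and let $\Gamma(t)=\sum_{n\ge1}\Gamma_n(t)$ with $\Gamma_1=\sum_\alpha\gamma_\alpha t^\alpha$ and $\Gamma_n=-\frac12\eta\big(\sum_{k=1}^{n-1}[\Gamma_k(t),\Gamma_{n-k}(t)]\big)$ for $n\ge2$. Then for every $t$ (in the domain of convergence of $\Gamma(t)$) in the Kuranishi space $\mathcal K^0_{\mathfrak g}=\{t : P_{\mathbf H}[\Gamma(t),\Gamma(t)]=0\}$ one has $\mu_2(\Gamma(t),\Gamma(t))=[\Gamma(t),\Gamma(t)]$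 and $\mu_n(\Gamma(t),\dots,\Gamma(t))=0$ for all $n\ge3$; consequently on $\mathcal K^0_{\mathfrak g}$ the $L_\infty$ Maurer–Cartan equation $\sum_{k\ge1}\frac{(-1)^{k(k+1)/2}}{k!}\mu_k(\Gamma(t),\dots,\Gamma(t))=0$ degenerates into the Maurer–Cartan equation $d\Gamma(t)+\frac12[\Gamma(t),\Gamma(t)]=0$ of the differential graded Lie algebra $(\mathfrak g,d,[\,,\,])$.
   Context: $\mathfrak g[n]^i=\mathfrak g^{i+n}$, so $\eta$ lowers degree by one; $\tilde v$ is the parity of the degree of homogeneous $v$. $Sh(n-1,n)$ is the set of permutations $\sigma$ of $\{1,\dots,n\}$ with $\sigma(1)<\dots<\sigma(n-1)$; $\tilde\sigma$ is its parity and the Koszul sign $e(\sigma)$ is defined by $v_{\sigma(1)}\wedge\dots\wedge v_{\sigma(n)}=(-1)^{\tilde\sigma}e(\sigma)v_1\wedge\dots\wedge v_n$. The coordinates $t^\alpha$ are even, so $\Gamma(t)$ has degree $1$. *)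

theory Defs
  imports "HOL-Analysis.Analysis" "HOL-Combinatorics.Permutations"
begin

definition kmod :: "('k::real_normed_field \<Rightarrow> 'v::real_normed_vector \<Rightarrow> 'v) \<Rightarrow> bool" where
  "kmod sc \<longleftrightarrow>
     (\<forall>a b v. sc (a + b) v = sc a v + sc b v) \<and>
     (\<forall>a v w. sc a (v + w) = sc a v + sc a w) \<and>
     (\<forall>a b v. sc (a * b) v = sc a (sc b v)) \<and>
     (\<forall>v. sc 1 v = v) \<and>
     (\<forall>r v. sc (of_real r) v = scaleR r v) \<and>
     (\<forall>a v. norm (sc a v) = norm a * norm v)"

definition klinear :: "('k \<Rightarrow> 'v::real_normed_vector \<Rightarrow> 'v) \<Rightarrow> ('v \<Rightarrow> 'v) \<Rightarrow> bool" where
  "klinear sc f \<longleftrightarrow> (\<forall>x y. f (x + y) = f x + f y) \<and> (\<forall>c x. f (sc c x) = sc c (f x))"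

definition kbilinear :: "('k \<Rightarrow> 'v::real_normed_vector \<Rightarrow> 'v) \<Rightarrow> ('v \<Rightarrow> 'v \<Rightarrow> 'v) \<Rightarrow> bool" where
  "kbilinear sc b \<longleftrightarrow> (\<forall>x. klinear sc (b x)) \<and> (\<forall>y. klinear sc (\<lambda>x. b x y))"

definition ksubspace :: "('k \<Rightarrow> 'v::real_normed_vector \<Rightarrow> 'v) \<Rightarrow> 'v set \<Rightarrow> bool" where
  "ksubspace sc S \<longleftrightarrow> 0 \<in> S \<and> (\<forall>x\<in>S. \<forall>y\<in>S. x + y \<in> S) \<and> (\<forall>c. \<forall>x\<in>S. sc c x \<in> S)"

text \<open>The graded pieces g^i are subspaces G i of an ambient normed space; their sum is direct.\<close>
definition graded_direct :: "(int \<Rightarrow> 'v::real_normed_vector set) \<Rightarrow> bool" where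
  "graded_direct G \<longleftrightarrow>
     (\<forall>I x. finite I \<longrightarrow> (\<forall>i\<in>I. x i \<in> G i) \<longrightarrow> (\<Sum>i\<in>I. x i) = 0 \<longrightarrow> (\<forall>i\<in>I. x i = 0))"

text \<open>Degree of a homogeneous element (arbitrary for 0, which never matters).\<close>
definition gdeg :: "(int \<Rightarrow> 'v set) \<Rightarrow> 'v \<Rightarrow> int" where
  "gdeg G v = (THE i. v \<in> G i)"

definition sgn_par :: "int \<Rightarrow> real" where
  "sgn_par m = (if even m then 1 else -1)"

definition DGLA :: "('k::real_normed_field \<Rightarrow> 'v::real_normed_vector \<Rightarrow> 'v) \<Rightarrow> (int \<Rightarrow> 'v set)
    \<Rightarrow> ('v \<Rightarrow> 'v) \<Rightarrow> ('v \<Rightarrow> 'v \<Rightarrow> 'v) \<Rightarrow> bool" where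
  "DGLA sc G d br \<longleftrightarrow>
     kmod sc \<and> (\<forall>i. ksubspace sc (G i)) \<and> graded_direct G \<and>
     klinear sc d \<and> kbilinear sc br \<and>
     (\<forall>i. \<forall>x\<in>G i. d x \<in> G (i + 1)) \<and>
     (\<forall>i. \<forall>x\<in>G i. d (d x) = 0) \<and>
     (\<forall>i j. \<forall>x\<in>G i. \<forall>y\<in>G j. br x y \<in> G (i + j)) \<and>
     (\<forall>i j. \<forall>x\<in>G i. \<forall>y\<in>G j. br x y = - (sgn_par (i * j) *\<^sub>R br y x)) \<and>
     (\<forall>i j l. \<forall>x\<in>G i. \<forall>y\<in>G j. \<forall>z\<in>G l.
        br x (br y z) = br (br x y) z + sgn_par (i * j) *\<^sub>R br y (br x z)) \<and>
     (\<forall>i j. \<forall>x\<in>G i. \<forall>y\<in>G j. d (br x y) = br (d x) y + sgn_par i *\<^sub>R br x (d y))"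

text \<open>Sh(n-1,n), zero-indexed: permutations of {0..<n} increasing on {0..<n-1}.\<close>
definition shuffles :: "nat \<Rightarrow> (nat \<Rightarrow> nat) set" where
  "shuffles n = {\<sigma>. \<sigma> permutes {..<n} \<and> (\<forall>i j. i < j \<and> j < n - 1 \<longrightarrow> \<sigma> i < \<sigma> j)}"

text \<open>Koszul sign e(sigma): product over inversions of (-1)^(|v_a||v_b|) of the swapped
  homogeneous elements, so that v_sigma(1) ^ ... ^ v_sigma(n) = sign(sigma) e(sigma) v_1 ^ ... ^ v_n
  in the graded exterior algebra.\<close>
definition koszul :: "(int \<Rightarrow> 'v::real_normed_vector set) \<Rightarrow> 'v list \<Rightarrow> (nat \<Rightarrow> nat) \<Rightarrow> real" where
  "koszul G vs \<sigma> =
     (\<Prod>p\<in>{(a, b). a < b \<and> b < length vs \<and> \<sigma> b < \<sigma> a}.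
        sgn_par (gdeg G (vs ! \<sigma> (fst p)) * gdeg G (vs ! \<sigma> (snd p))))"

fun mu :: "(int \<Rightarrow> 'v::real_normed_vector set) \<Rightarrow> ('v \<Rightarrow> 'v) \<Rightarrow> ('v \<Rightarrow> 'v \<Rightarrow> 'v) \<Rightarrow> ('v \<Rightarrow> 'v)
    \<Rightarrow> nat \<Rightarrow> 'v list \<Rightarrow> 'v" where
  "mu G d br eta 0 vs = 0"
| "mu G d br eta (Suc 0) vs = d (vs ! 0)"
| "mu G d br eta (Suc (Suc 0)) vs =
     d (eta (br (vs ! 0) (vs ! 1))) + eta (d (br (vs ! 0) (vs ! 1)))"
| "mu G d br eta (Suc (Suc (Suc m))) vs =
     ((-1) ^ Suc (Suc (Suc m))) *\<^sub>R
       (\<Sum>\<sigma>\<in>shuffles (Suc (Suc (Suc m))).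
          (real_of_int (sign \<sigma>) * koszul G vs \<sigma>) *\<^sub>R
            eta (br (mu G d br eta (Suc (Suc m)) (map (\<lambda>i. vs ! \<sigma> i) [0..<Suc (Suc m)]))
                    (vs ! \<sigma> (Suc (Suc m)))))"

fun Gam :: "('k \<Rightarrow> 'v::real_normed_vector \<Rightarrow> 'v) \<Rightarrow> ('v \<Rightarrow> 'v \<Rightarrow> 'v) \<Rightarrow> ('v \<Rightarrow> 'v)
    \<Rightarrow> ('a \<Rightarrow> 'v) \<Rightarrow> ('a \<Rightarrow> 'k::zero) \<Rightarrow> nat \<Rightarrow> 'v" where
  "Gam sc br eta gam t n =
     (if n = 0 then 0
      else if n = 1 then (\<Sum>\<alpha>\<in>{\<alpha>. t \<alpha> \<noteq> 0}. sc (t \<alpha>) (gam \<alpha>))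
      else - ((1/2) *\<^sub>R eta (\<Sum>k\<in>{1..<n}. br (Gam sc br eta gam t k) (Gam sc br eta gam t (n - k)))))"

end

theory Submission
  imports Defs
begin

(* Every term \<Gamma>_n has degree 1, hence so has \<Gamma>(t) = \<Sum> \<Gamma>_n (the degree-one part is closed).
   On the Kuranishi space the harmonic part of [\<Gamma>,\<Gamma>] vanishes, so the homotopy formula gives
   \<mu>_2(\<Gamma>,\<Gamma>) = (d\<eta> + \<eta>d)[\<Gamma>,\<Gamma>] = [\<Gamma>,\<Gamma>]. For an odd element the graded Jacobi identity
   forces [[\<Gamma>,\<Gamma>],\<Gamma>] = 0, so every summand \<eta>[\<mu>_2(\<Gamma>,\<Gamma>),\<Gamma>] of \<mu>_3(\<Gamma>,\<Gamma>,\<Gamma>) vanishes, and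
   inductively every summand \<eta>[\<mu>_(n-1)(\<Gamma>,...,\<Gamma>),\<Gamma>] of \<mu>_n. Only \<mu>_1 and \<mu>_2 survive in the
   L-infinity Maurer-Cartan series, which becomes -(d\<Gamma> + [\<Gamma>,\<Gamma>]/2). *)

declare Gam.simps[simp del]

lemma klinear_zero: "klinear sc f \<Longrightarrow> f 0 = 0"
  unfolding klinear_def by (metis add_cancel_right_right add_0)

lemma kbilinear_zero_left: "kbilinear sc br \<Longrightarrow> br 0 y = 0"
  unfolding kbilinear_def by (metis klinear_zero)

lemma ksubspace_sum: "ksubspace sc S \<Longrightarrow> (\<And>x. x \<in> A \<Longrightarrow> f x \<in> S) \<Longrightarrow> sum f A \<in> S"
  by (induction A rule: infinite_finite_induct) (auto simp: ksubspace_def)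

lemma ksubspace_scaleR:
  assumes "kmod sc" "ksubspace sc S" "x \<in> S"
  shows "r *\<^sub>R x \<in> S"
proof -
  have "sc (of_real r) x \<in> S" using assms(2,3) unfolding ksubspace_def by blast
  moreover have "sc (of_real r) x = r *\<^sub>R x" using assms(1) unfolding kmod_def by blast
  ultimately show ?thesis by simp
qed

lemma suminf_in_closed_ksubspace:
  assumes "ksubspace sc S" "closed S" "summable f" "\<And>n. f n \<in> S"
  shows "suminf f \<in> S"
proof (rule closed_sequentially[OF \<open>closed S\<close>])
  show "(\<Sum>i<n. f i) \<in> S" for n
    using assms(1,4) by (rule ksubspace_sum)
  show "(\<lambda>n. \<Sum>i<n. f i) \<longlonglongrightarrow> suminf f"
    using \<open>summable f\<close> by (rule summable_LIMSEQ)
qed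

lemma DGLA_kmod: "DGLA sc G d br \<Longrightarrow> kmod sc"
  unfolding DGLA_def by (elim conjE)

lemma DGLA_ksubspace: "DGLA sc G d br \<Longrightarrow> ksubspace sc (G i)"
  unfolding DGLA_def by (elim conjE) (erule allE)

lemma DGLA_bracket_zero_left: "DGLA sc G d br \<Longrightarrow> br 0 y = 0"
  unfolding DGLA_def by (elim conjE) (erule kbilinear_zero_left)

lemma DGLA_bracket_degree: "DGLA sc G d br \<Longrightarrow> x \<in> G i \<Longrightarrow> y \<in> G j \<Longrightarrow> br x y \<in> G (i + j)"
  unfolding DGLA_def by blast

lemma DGLA_bracket_antisym:
  "DGLA sc G d br \<Longrightarrow> x \<in> G i \<Longrightarrow> y \<in> G j \<Longrightarrow> br x y = - (sgn_par (i * j) *\<^sub>R br y x)"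
  unfolding DGLA_def by blast

lemma DGLA_jacobi:
  "DGLA sc G d br \<Longrightarrow> x \<in> G i \<Longrightarrow> y \<in> G j \<Longrightarrow> z \<in> G l \<Longrightarrow>
    br x (br y z) = br (br x y) z + sgn_par (i * j) *\<^sub>R br y (br x z)"
  unfolding DGLA_def by blast

lemma Gam_degree_one:
  assumes dgla: "DGLA sc G d br"
    and eta_deg: "\<forall>i. \<forall>x\<in>G i. eta x \<in> G (i - 1)"
    and gam_deg: "\<forall>\<alpha>. gam \<alpha> \<in> G 1"
  shows "Gam sc br eta gam t n \<in> G 1"
proof (induction n rule: less_induct)
  case (less n)
  note sub = DGLA_ksubspace[OF dgla]
  consider "n = 0" | "n = 1" | "n \<ge> 2" by linarith
  then show ?case
  proof cases
    case 1
    then show ?thesis using sub by (simp add: Gam.simps ksubspace_def)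
  next
    case 2
    have "(\<Sum>\<alpha>\<in>{\<alpha>. t \<alpha> \<noteq> 0}. sc (t \<alpha>) (gam \<alpha>)) \<in> G 1"
      using sub gam_deg by (intro ksubspace_sum) (auto simp: ksubspace_def)
    then show ?thesis using 2 by (simp add: Gam.simps)
  next
    case 3
    let ?B = "\<Sum>k\<in>{1..<n}. br (Gam sc br eta gam t k) (Gam sc br eta gam t (n - k))"
    have "?B \<in> G (1 + 1)"
    proof (rule ksubspace_sum[OF sub])
      fix k assume "k \<in> {1..<n}"
      then have "Gam sc br eta gam t k \<in> G 1" "Gam sc br eta gam t (n - k) \<in> G 1"
        using less by auto
      then show "br (Gam sc br eta gam t k) (Gam sc br eta gam t (n - k)) \<in> G (1 + 1)"
        by (rule DGLA_bracket_degree[OF dgla])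
    qed
    then have "eta ?B \<in> G 1"
      using eta_deg by fastforce
    then have "(- (1/2)) *\<^sub>R eta ?B \<in> G 1"
      by (rule ksubspace_scaleR[OF DGLA_kmod[OF dgla] sub])
    then show ?thesis using 3 by (simp add: Gam.simps)
  qed
qed

lemma mu_2_eq_bracket:
  assumes "br x y = P (br x y) + d (eta (br x y)) + eta (d (br x y))"
    and "P (br x y) = 0"
  shows "mu G d br eta 2 [x, y] = br x y"
proof -
  have "mu G d br eta 2 [x, y] = d (eta (br x y)) + eta (d (br x y))"
    by (simp add: numeral_2_eq_2)
  also have "\<dots> = br x y"
    using assms by (metis add_0_left)
  finally show ?thesis .
qed

lemma DGLA_bracket_odd_self_self:
  assumes dgla: "DGLA sc G d br" and x: "x \<in> G i" and "odd i"
  shows "br (br x x) x = 0"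
proof -
  have xx: "br x x \<in> G (i + i)"
    using DGLA_bracket_degree[OF dgla x x] .
  have sgn_odd: "sgn_par (i * i) = -1" and sgn_even: "sgn_par (i * (i + i)) = 1"
    using \<open>odd i\<close> by (simp_all add: sgn_par_def)
  have jacobi: "br x (br x x) = br (br x x) x + sgn_par (i * i) *\<^sub>R br x (br x x)"
    using DGLA_jacobi[OF dgla x x x] .
  have "br x (br x x) = - (sgn_par (i * (i + i)) *\<^sub>R br (br x x) x)"
    using DGLA_bracket_antisym[OF dgla x xx] .
  then have anti: "br x (br x x) = - br (br x x) x"
    unfolding sgn_even by simp
  from jacobi have "- br (br x x) x = br (br x x) x + (- 1) *\<^sub>R (- br (br x x) x)"
    unfolding anti sgn_odd .
  then have "br (br x x) x + (br (br x x) x + br (br x x) x) = 0"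
    by (simp add: neg_eq_iff_add_eq_0)
  moreover have "(3::real) *\<^sub>R br (br x x) x = br (br x x) x + (br (br x x) x + br (br x x) x)"
    using scaleR_add_left[of 1 2 "br (br x x) x"] by (simp add: scaleR_2)
  ultimately show ?thesis by simp
qed

lemma mu_replicate_Suc_eq_zero:
  assumes "br (mu G d br eta (Suc (Suc m)) (replicate (Suc (Suc m)) g)) g = 0"
    and "eta 0 = 0"
  shows "mu G d br eta (Suc (Suc (Suc m))) (replicate (Suc (Suc (Suc m))) g) = 0"
proof -
  define n where "n = Suc (Suc (Suc m))"
  define vs where "vs = replicate n g"
  have vs_nth: "vs ! i = g" if "i < n" for i
    using that by (simp add: vs_def)
  have "eta (br (mu G d br eta (Suc (Suc m)) (map (\<lambda>i. vs ! \<sigma> i) [0..<Suc (Suc m)]))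
          (vs ! \<sigma> (Suc (Suc m)))) = 0" if "\<sigma> \<in> shuffles n" for \<sigma>
  proof -
    have \<sigma>_lt: "\<sigma> i < n" if "i < n" for i
      using permutes_in_image \<open>\<sigma> \<in> shuffles n\<close> that by (fastforce simp: shuffles_def)
    then have vs_\<sigma>: "vs ! \<sigma> i = g" if "i < n" for i
      using that vs_nth by blast
    have "map (\<lambda>i. vs ! \<sigma> i) [0..<Suc (Suc m)] = replicate (Suc (Suc m)) g"
      by (rule nth_equalityI) (simp_all del: upt_Suc replicate_Suc add: vs_\<sigma> n_def)
    moreover have "vs ! \<sigma> (Suc (Suc m)) = g"
      by (simp add: vs_\<sigma> n_def)
    ultimately show ?thesis using assms by simp
  qed
  then show ?thesis
    unfolding n_def[symmetric] vs_def[symmetric] by (simp add: n_def)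
qed

lemma mu_replicate_vanish:
  assumes bracket_mu2: "br (mu G d br eta 2 [g, g]) g = 0"
    and br_zero: "\<And>y. br 0 y = 0" and eta_zero: "eta 0 = 0"
  shows "\<forall>n\<ge>3. mu G d br eta n (replicate n g) = 0"
proof -
  have "br (mu G d br eta (Suc (Suc m)) (replicate (Suc (Suc m)) g)) g = 0" for m
  proof (induction m)
    case 0
    then show ?case using bracket_mu2 by (simp add: numeral_2_eq_2)
  next
    case (Suc m)
    then show ?case
      using mu_replicate_Suc_eq_zero[of br G d eta m g] eta_zero br_zero by simp
  qed
  then have "mu G d br eta (Suc (Suc (Suc m))) (replicate (Suc (Suc (Suc m))) g) = 0" for m
    by (intro mu_replicate_Suc_eq_zero eta_zero)
  then show ?thesis
    by (auto simp: le_iff_add numeral_3_eq_3)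
qed

lemma replicate_2_eq: "replicate 2 x = [x, x]"
  by (simp add: numeral_2_eq_2)

lemma Linf_MC_series_truncates:
  assumes "\<forall>n\<ge>3. mu G d br eta n (replicate n g) = 0"
  shows "(\<Sum>k. (((-1) ^ (Suc k * (Suc k + 1) div 2)) / fact (Suc k)) *\<^sub>R
              mu G d br eta (Suc k) (replicate (Suc k) g))
         = - (d g + (1/2) *\<^sub>R mu G d br eta 2 [g, g])"
    (is "suminf ?f = _")
proof -
  have "?f k = 0" if "k \<notin> {0, 1}" for k
  proof -
    have "Suc k \<ge> 3" using that by auto
    then show ?thesis using assms by (simp only: scaleR_zero_right)
  qed
  then have "suminf ?f = ?f 0 + ?f 1"
    by (subst suminf_finite[of "{0, 1}"]) auto
  also have "\<dots> = - (d g + (1/2) *\<^sub>R mu G d br eta 2 [g, g])"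
    by (simp only: Suc_1 replicate_2_eq) simp
  finally show ?thesis .
qed

theorem mainTheorem5:
  fixes sc :: "'k::real_normed_field \<Rightarrow> 'v::real_normed_vector \<Rightarrow> 'v"
    and G :: "int \<Rightarrow> 'v set"
    and d eta P :: "'v \<Rightarrow> 'v"
    and br :: "'v \<Rightarrow> 'v \<Rightarrow> 'v"
    and Hs :: "int \<Rightarrow> 'v set"
    and gam :: "'a \<Rightarrow> 'v"
    and t :: "'a \<Rightarrow> 'k"
  assumes dgla: "DGLA sc G d br"
    and closed: "\<forall>i. closed (G i)"
    and d_cont: "\<forall>i. continuous_on (G i) d"
    and br_cont: "\<forall>i j. continuous_on (G i \<times> G j) (\<lambda>p. br (fst p) (snd p))"
    and H_sub: "\<forall>i. ksubspace sc (Hs i) \<and> Hs i \<subseteq> G i"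
    and P_lin: "klinear sc P" and P_range: "\<forall>i. \<forall>x\<in>G i. P x \<in> Hs i"
    and P_proj: "\<forall>i. \<forall>h\<in>Hs i. P h = h"
    and P_cont: "\<forall>i. continuous_on (G i) P"
    and eta_lin: "klinear sc eta" and eta_deg: "\<forall>i. \<forall>x\<in>G i. eta x \<in> G (i - 1)"
    and eta_cont: "\<forall>i. continuous_on (G i) eta"
    and homotopy: "\<forall>i. \<forall>x\<in>G i. x = P x + d (eta x) + eta (d x)"
    and gam_cl: "\<forall>\<alpha>. gam \<alpha> \<in> G 1 \<and> d (gam \<alpha>) = 0"
    and gam_span: "\<forall>z\<in>G 1. d z = 0 \<longrightarrow>
        (\<exists>c :: 'a \<Rightarrow> 'k. finite {\<alpha>. c \<alpha> \<noteq> 0} \<and>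
          (\<exists>y\<in>G 0. z = (\<Sum>\<alpha>\<in>{\<alpha>. c \<alpha> \<noteq> 0}. sc (c \<alpha>) (gam \<alpha>)) + d y))"
    and gam_indep: "\<forall>c :: 'a \<Rightarrow> 'k. finite {\<alpha>. c \<alpha> \<noteq> 0} \<longrightarrow>
        (\<exists>y\<in>G 0. (\<Sum>\<alpha>\<in>{\<alpha>. c \<alpha> \<noteq> 0}. sc (c \<alpha>) (gam \<alpha>)) = d y) \<longrightarrow> (\<forall>\<alpha>. c \<alpha> = 0)"
    and t_fin: "finite {\<alpha>. t \<alpha> \<noteq> 0}"
    and t_conv: "summable (Gam sc br eta gam t)"
    and kuranishi: "P (br (suminf (Gam sc br eta gam t)) (suminf (Gam sc br eta gam t))) = 0"
  shows "mu G d br eta 2 [suminf (Gam sc br eta gam t), suminf (Gam sc br eta gam t)]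
           = br (suminf (Gam sc br eta gam t)) (suminf (Gam sc br eta gam t))
       \<and> (\<forall>n\<ge>3. mu G d br eta n (replicate n (suminf (Gam sc br eta gam t))) = 0)
       \<and> ((\<Sum>k. (((-1) ^ (Suc k * (Suc k + 1) div 2)) / fact (Suc k)) *\<^sub>R
                 mu G d br eta (Suc k) (replicate (Suc k) (suminf (Gam sc br eta gam t)))) = 0
          \<longleftrightarrow> d (suminf (Gam sc br eta gam t))
                + (1/2) *\<^sub>R br (suminf (Gam sc br eta gam t)) (suminf (Gam sc br eta gam t)) = 0)"
proof -
  define g where "g = suminf (Gam sc br eta gam t)"
  have gam_deg: "\<forall>\<alpha>. gam \<alpha> \<in> G 1"
    using gam_cl by blast
  have g_deg: "g \<in> G 1"
    unfolding g_def using DGLA_ksubspace[OF dgla] closed[rule_format] t_conv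
      Gam_degree_one[OF dgla eta_deg gam_deg]
    by (rule suminf_in_closed_ksubspace)
  have "br g g \<in> G (1 + 1)"
    using DGLA_bracket_degree[OF dgla g_deg g_deg] .
  then have "br g g = P (br g g) + d (eta (br g g)) + eta (d (br g g))"
    using homotopy by blast
  moreover have "P (br g g) = 0"
    using kuranishi unfolding g_def .
  ultimately have mu2: "mu G d br eta 2 [g, g] = br g g"
    by (rule mu_2_eq_bracket)
  have "br (br g g) g = 0"
    using DGLA_bracket_odd_self_self[OF dgla g_deg] by simp
  then have mun: "\<forall>n\<ge>3. mu G d br eta n (replicate n g) = 0"
    using mu2 DGLA_bracket_zero_left[OF dgla] klinear_zero[OF eta_lin]
    by (intro mu_replicate_vanish) auto
  note series = Linf_MC_series_truncates[OF mun, unfolded mu2]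
  show ?thesis
    unfolding g_def[symmetric] series neg_equal_0_iff_equal using mu2 mun by blast
qed

end
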